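(* Let $f\in\mathcal{C}$ and let $f^\ast(t):=t f(1/t)$ for $t>0$, extended by $f^\ast(0):=\lim_{t\downarrow0}f^\ast(t)\in(-\infty,\infty]$. Then for all probability measures $P,Q$ on a common measurable space and all $\gamma\in[1,\infty)$, $$D_f(P\|Q)\ \ge\ f^\ast\!\Bigl(1+\tfrac1\gamma E_\gamma(P\|Q)\Bigr) + f^\ast\!\Bigl(\tfrac1\gamma\bigl(1-E_\gamma(P\|Q)\bigr)\Bigr) - f^\ast\!\Bigl(\tfrac1\gamma\Bigr).$$
   Context: $\mathcal{C}$ is the set of convex $f\colon(0,\infty)\to\mathbb{R}$ with $f(1)=0$. For densities $p,q$ of $P,Q$ w.r.t. a dominating measure $\mu$, $D_f(P\|Q):=\int qf(p/q)\,\mathrm{d}\mu$ with conventions $f(0):=\lim_{t\downarrow0}f(t)$, $0f(0/0)=0$, $0f(a/0)=a\lim_{u\to\infty}f(u)/u$ for $a>0$. For $\gamma\ge1$, $E_\gamma(P\|Q):=\sup_U(P(U)-\gamma Q(U))=\int(p-\gamma q)^+\,\mathrm{d}\mu$. *)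

theory Defs
  imports "HOL-Probability.Probability"
begin

definition f_zero :: "(real \<Rightarrow> real) \<Rightarrow> ereal" where
  "f_zero f = Lim (at_right 0) (\<lambda>t. ereal (f t))"

definition f_slope_inf :: "(real \<Rightarrow> real) \<Rightarrow> ereal" where
  "f_slope_inf f = Lim at_top (\<lambda>u. ereal (f u / u))"

definition fdiv_integrand :: "(real \<Rightarrow> real) \<Rightarrow> real \<Rightarrow> real \<Rightarrow> ereal" where
  "fdiv_integrand f a b =
     (if b > 0 then (if a > 0 then ereal (b * f (a / b)) else ereal b * f_zero f)
      else if a > 0 then ereal a * f_slope_inf f else 0)"

definition f_divergence ::
  "(real \<Rightarrow> real) \<Rightarrow> 'a measure \<Rightarrow> ('a \<Rightarrow> real) \<Rightarrow> ('a \<Rightarrow> real) \<Rightarrow> ereal" where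
  "f_divergence f \<mu> p q =
     enn2ereal (\<integral>\<^sup>+ x. e2ennreal (fdiv_integrand f (p x) (q x)) \<partial>\<mu>)
     - enn2ereal (\<integral>\<^sup>+ x. e2ennreal (- fdiv_integrand f (p x) (q x)) \<partial>\<mu>)"

definition E_gamma :: "real \<Rightarrow> 'a measure \<Rightarrow> 'a measure \<Rightarrow> real" where
  "E_gamma \<gamma> P Q = (SUP U \<in> sets P. measure P U - \<gamma> * measure Q U)"

definition f_star :: "(real \<Rightarrow> real) \<Rightarrow> real \<Rightarrow> ereal" where
  "f_star f t = (if t > 0 then ereal (t * f (1 / t))
                 else Lim (at_right 0) (\<lambda>s. ereal (s * f (1 / s))))"

end

(* An affine minorant a u + b \<le> f u of f gives a + b t \<le> f*(t), with equality at t > 0 for the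
   tangent at 1/t; so f*(t) is the upper envelope of such a + b t (at t = 0 a limit of slopes).
   For two minorants, comparing each with f at \<gamma> and at p/q on {p \<le> \<gamma> q}, resp. {p > \<gamma> q}, gives
     q f(p/q) \<ge> (a1 + a2 - f(\<gamma>)/\<gamma>) p + b1 min(q, p/\<gamma>) + b2 max(q, p/\<gamma>)
   pointwise.  Integrating, \<integral> min(q, p/\<gamma>) = (1 - E_\<gamma>)/\<gamma> and \<integral> max(q, p/\<gamma>) = 1 + E_\<gamma>/\<gamma>, so
   D_f \<ge> (a1 + b1 (1 - E_\<gamma>)/\<gamma>) + (a2 + b2 (1 + E_\<gamma>/\<gamma>)) - f*(1/\<gamma>); taking the supremum over
   the two minorants gives the bound. *)
theory Submission
  imports Defs
begin

definition affine_minorant :: "(real \<Rightarrow> real) \<Rightarrow> real \<Rightarrow> real \<Rightarrow> bool" where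
  "affine_minorant f a b \<longleftrightarrow> (\<forall>u>0. a * u + b \<le> f u)"

lemma convex_on_supporting_line:
  fixes f :: "real \<Rightarrow> real"
  assumes cvx: "convex_on I f" and "x \<in> I" "a \<in> I" "a < x" "b \<in> I" "x < b"
  shows "\<exists>g. \<forall>y\<in>I. f x + g * (y - x) \<le> f y"
proof -
  define S where "S = (\<lambda>v. (f x - f v) / (x - v)) ` {v\<in>I. v < x}"
  have left_le_right: "s \<le> (f w - f x) / (w - x)" if "s \<in> S" "w \<in> I" "x < w" for s w
  proof -
    obtain v where v: "v \<in> I" "v < x" and s: "s = (f x - f v) / (x - v)"
      using \<open>s \<in> S\<close> by (auto simp: S_def)
    have "(f v - f x) / (v - x) \<le> (f v - f w) / (v - w)"
         "(f v - f w) / (v - w) \<le> (f x - f w) / (x - w)"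
      using convex_on_slope_le[OF cvx, of v w x] v that assms(2) by auto
    moreover have "(f v - f x) / (v - x) = s" "(f x - f w) / (x - w) = (f w - f x) / (w - x)"
      unfolding s by (metis minus_diff_eq minus_divide_divide)+
    ultimately show ?thesis by linarith
  qed
  have "S \<noteq> {}" using assms by (auto simp: S_def)
  have "bdd_above S" using left_le_right assms by (auto simp: bdd_above_def)
  have "f x + Sup S * (y - x) \<le> f y" if "y \<in> I" for y
  proof (cases y x rule: linorder_cases)
    case less
    then have "(f x - f y) / (x - y) \<le> Sup S"
      using \<open>bdd_above S\<close> that by (intro cSup_upper) (auto simp: S_def)
    with less show ?thesis by (simp add: field_simps)
  next
    case greater
    then have "Sup S \<le> (f y - f x) / (y - x)"
      using \<open>S \<noteq> {}\<close> left_le_right that by (intro cSup_least) auto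
    with greater show ?thesis by (simp add: field_simps)
  qed simp
  then show ?thesis by blast
qed

lemma affine_minorant_touching:
  fixes f :: "real \<Rightarrow> real"
  assumes "convex_on {0<..} f" and "u > 0"
  shows "\<exists>a. affine_minorant f a (f u - a * u)"
proof -
  obtain a where "\<forall>y\<in>{0<..}. f u + a * (y - u) \<le> f y"
    using convex_on_supporting_line[OF assms(1), of u "u / 2" "u + 1"] assms(2) by auto
  then have "affine_minorant f a (f u - a * u)"
    by (auto simp: affine_minorant_def algebra_simps)
  then show ?thesis ..
qed

lemma f_star_eq_affine_minorant:
  fixes f :: "real \<Rightarrow> real"
  assumes "convex_on {0<..} f" and "x > 0"
  shows "\<exists>a b. affine_minorant f a b \<and> a + b * x = x * f (1 / x)"
proof -
  obtain a where "affine_minorant f a (f (1 / x) - a * (1 / x))"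
    using affine_minorant_touching[OF assms(1), of "1 / x"] assms(2) by auto
  moreover have "a + (f (1 / x) - a * (1 / x)) * x = x * f (1 / x)"
    using assms(2) by (simp add: algebra_simps)
  ultimately show ?thesis by blast
qed

lemma convex_on_slope_from_one_mono:
  fixes f :: "real \<Rightarrow> real"
  assumes cvx: "convex_on {0<..} f" and f1: "f 1 = 0"
    and "0 < s" "s < t" "s \<noteq> 1" "t \<noteq> 1"
  shows "f s / (s - 1) \<le> f t / (t - 1)"
proof -
  have flip: "(f 1 - f u) / (1 - u) = f u / (u - 1)" for u
    using f1 by (metis diff_zero minus_diff_eq minus_divide_divide)
  consider "t < 1" | "s < 1" "1 < t" | "1 < s"
    using assms(4-6) by linarith
  then show ?thesis
  proof cases
    case 1
    then show ?thesis
      using convex_on_slope_le(2)[OF cvx, of s 1 t] assms(3,4) f1 by auto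
  next
    case 2
    then show ?thesis
      using convex_on_slope_le[OF cvx, of s t 1] assms(3) f1 flip[of t] by auto
  next
    case 3
    then show ?thesis
      using convex_on_slope_le(1)[OF cvx, of 1 t s] assms(4) flip[of s] flip[of t] by auto
  qed
qed

lemma tendsto_at_top_SUP_mono:
  fixes g :: "real \<Rightarrow> 'b::{complete_linorder, linorder_topology}"
  assumes mono: "\<And>s t. c < s \<Longrightarrow> s \<le> t \<Longrightarrow> g s \<le> g t"
  shows "(g \<longlongrightarrow> (SUP t\<in>{c<..}. g t)) at_top"
proof (rule increasing_tendsto)
  show "\<forall>\<^sub>F t in at_top. g t \<le> (SUP t\<in>{c<..}. g t)"
    using eventually_gt_at_top[of c] by eventually_elim (auto intro: SUP_upper)
next
  fix y assume "y < (SUP t\<in>{c<..}. g t)"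
  then obtain s where s: "c < s" "y < g s"
    by (auto simp: less_SUP_iff)
  show "\<forall>\<^sub>F t in at_top. y < g t"
    using eventually_ge_at_top[of s]
    by (rule eventually_mono) (use mono s in \<open>fastforce intro: less_le_trans\<close>)
qed

lemma tendsto_at_right_SUP_antimono:
  fixes g :: "real \<Rightarrow> 'b::{complete_linorder, linorder_topology}"
  assumes "c < d" and antimono: "\<And>s t. c < s \<Longrightarrow> s \<le> t \<Longrightarrow> t < d \<Longrightarrow> g t \<le> g s"
  shows "(g \<longlongrightarrow> (SUP t\<in>{c<..<d}. g t)) (at_right c)"
proof (rule increasing_tendsto)
  show "\<forall>\<^sub>F t in at_right c. g t \<le> (SUP t\<in>{c<..<d}. g t)"
    unfolding eventually_at_right_field using \<open>c < d\<close> by (auto intro!: exI[of _ d] SUP_upper)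
next
  fix y assume "y < (SUP t\<in>{c<..<d}. g t)"
  then obtain s where "c < s" "s < d" "y < g s"
    by (auto simp: less_SUP_iff)
  then show "\<forall>\<^sub>F t in at_right c. y < g t"
    unfolding eventually_at_right_field
    by (intro exI[of _ s]) (use antimono in \<open>fastforce intro: less_le_trans\<close>)
qed

lemma tendsto_f_slope_inf:
  fixes f :: "real \<Rightarrow> real"
  assumes cvx: "convex_on {0<..} f" and f1: "f 1 = 0"
  shows "((\<lambda>u. ereal (f u / (u - 1))) \<longlongrightarrow> f_slope_inf f) at_top"
    and "((\<lambda>u. ereal (f u / u)) \<longlongrightarrow> f_slope_inf f) at_top"
proof -
  define L where "L = (SUP u\<in>{1<..}. ereal (f u / (u - 1)))"
  have "ereal (f s / (s - 1)) \<le> ereal (f t / (t - 1))" if "1 < s" "s \<le> t" for s t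
    using convex_on_slope_from_one_mono[OF cvx f1, of s t] that by (cases "s = t") auto
  then have slope: "((\<lambda>u. ereal (f u / (u - 1))) \<longlongrightarrow> L) at_top"
    unfolding L_def by (rule tendsto_at_top_SUP_mono)
  have "((\<lambda>u::real. 1 - inverse u) \<longlongrightarrow> 1 - 0) at_top"
    by (rule tendsto_diff[OF tendsto_const tendsto_inverse_0_at_top[OF filterlim_ident]])
  then have "((\<lambda>u. ereal (1 - inverse u)) \<longlongrightarrow> 1) at_top"
    by (simp add: one_ereal_def tendsto_ereal)
  from tendsto_mult_ereal[OF slope this]
  have "((\<lambda>u. ereal (f u / (u - 1)) * ereal (1 - inverse u)) \<longlongrightarrow> L) at_top"
    by simp
  moreover have "\<forall>\<^sub>F u in at_top. ereal (f u / (u - 1)) * ereal (1 - inverse u) = ereal (f u / u)"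
    using eventually_gt_at_top[of 1] by eventually_elim (simp add: field_simps)
  ultimately have ratio: "((\<lambda>u. ereal (f u / u)) \<longlongrightarrow> L) at_top"
    by (rule Lim_transform_eventually)
  then have "f_slope_inf f = L"
    unfolding f_slope_inf_def by (rule tendsto_Lim[OF trivial_limit_at_top_linorder])
  then show "((\<lambda>u. ereal (f u / (u - 1))) \<longlongrightarrow> f_slope_inf f) at_top"
    and "((\<lambda>u. ereal (f u / u)) \<longlongrightarrow> f_slope_inf f) at_top"
    using slope ratio by simp_all
qed

lemma tendsto_f_zero:
  fixes f :: "real \<Rightarrow> real"
  assumes cvx: "convex_on {0<..} f" and f1: "f 1 = 0"
  shows "((\<lambda>t. ereal (f t)) \<longlongrightarrow> f_zero f) (at_right 0)"
proof -
  define L where "L = (SUP t\<in>{0<..<1}. ereal (f t / (1 - t)))"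
  have flip: "f t / (1 - t) = - (f t / (t - 1))" for t
    by (metis minus_diff_eq divide_minus_right)
  have "f t / (1 - t) \<le> f s / (1 - s)" if "0 < s" "s \<le> t" "t < 1" for s t
    using convex_on_slope_from_one_mono[OF cvx f1, of s t] that unfolding flip
    by (cases "s = t") auto
  then have quotient: "((\<lambda>t. ereal (f t / (1 - t))) \<longlongrightarrow> L) (at_right 0)"
    unfolding L_def by (intro tendsto_at_right_SUP_antimono) auto
  have "((\<lambda>t. 1 - t) \<longlongrightarrow> 1 - 0) (at_right (0::real))"
    by (intro tendsto_intros)
  then have "((\<lambda>t. ereal (1 - t)) \<longlongrightarrow> 1) (at_right 0)"
    by (simp add: one_ereal_def tendsto_ereal)
  from tendsto_mult_ereal[OF quotient this]
  have "((\<lambda>t. ereal (f t / (1 - t)) * ereal (1 - t)) \<longlongrightarrow> L) (at_right 0)"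
    by simp
  moreover have "\<forall>\<^sub>F t in at_right 0. ereal (f t / (1 - t)) * ereal (1 - t) = ereal (f t)"
    unfolding eventually_at_right_field by (intro exI[of _ 1]) auto
  ultimately have "((\<lambda>t. ereal (f t)) \<longlongrightarrow> L) (at_right 0)"
    by (rule Lim_transform_eventually)
  moreover from this have "f_zero f = L"
    unfolding f_zero_def by (rule tendsto_Lim[OF trivial_limit_at_right_real])
  ultimately show ?thesis by simp
qed

lemma f_star_zero:
  fixes f :: "real \<Rightarrow> real"
  assumes "convex_on {0<..} f" and "f 1 = 0"
  shows "f_star f 0 = f_slope_inf f"
proof -
  have "((\<lambda>s. ereal (f (inverse s) / inverse s)) \<longlongrightarrow> f_slope_inf f) (at_right 0)"
    using filterlim_compose[OF tendsto_f_slope_inf(2)[OF assms] filterlim_inverse_at_top_right]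
    by simp
  moreover have "\<forall>\<^sub>F s in at_right 0. ereal (f (inverse s) / inverse s) = ereal (s * f (1 / s))"
    unfolding eventually_at_right_field by (intro exI[of _ 1]) (auto simp: field_simps)
  ultimately have "((\<lambda>s. ereal (s * f (1 / s))) \<longlongrightarrow> f_slope_inf f) (at_right 0)"
    by (rule Lim_transform_eventually)
  then show ?thesis
    unfolding f_star_def by (simp add: tendsto_Lim[OF trivial_limit_at_right_real])
qed

lemma affine_minorant_le_f_zero:
  fixes f :: "real \<Rightarrow> real"
  assumes "convex_on {0<..} f" and "f 1 = 0" and "affine_minorant f a b"
  shows "ereal b \<le> f_zero f"
proof (rule tendsto_le[OF trivial_limit_at_right_real tendsto_f_zero[OF assms(1,2)]])
  have "((\<lambda>t. a * t + b) \<longlongrightarrow> a * 0 + b) (at_right (0::real))"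
    by (intro tendsto_intros)
  then show "((\<lambda>t. ereal (a * t + b)) \<longlongrightarrow> ereal b) (at_right 0)"
    by (simp add: tendsto_ereal)
  show "\<forall>\<^sub>F t in at_right 0. ereal (a * t + b) \<le> ereal (f t)"
    using assms(3) unfolding eventually_at_right_field affine_minorant_def
    by (intro exI[of _ 1]) auto
qed

lemma affine_minorant_le_f_slope_inf:
  fixes f :: "real \<Rightarrow> real"
  assumes "convex_on {0<..} f" and "f 1 = 0" and "affine_minorant f a b"
  shows "ereal a \<le> f_slope_inf f"
proof (rule tendsto_le[OF trivial_limit_at_top_linorder tendsto_f_slope_inf(2)[OF assms(1,2)]])
  have "((\<lambda>u. a + b * inverse u) \<longlongrightarrow> a + b * 0) at_top"
    by (intro tendsto_intros tendsto_inverse_0_at_top filterlim_ident)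
  then show "((\<lambda>u. ereal (a + b * inverse u)) \<longlongrightarrow> ereal a) at_top"
    by (simp add: tendsto_ereal)
  show "\<forall>\<^sub>F u in at_top. ereal (a + b * inverse u) \<le> ereal (f u / u)"
    using eventually_gt_at_top[of 0]
  proof eventually_elim
    case (elim u)
    with assms(3) have "(a * u + b) / u \<le> f u / u"
      unfolding affine_minorant_def by (simp add: divide_right_mono)
    with elim show ?case by (simp add: field_simps)
  qed
qed

text \<open>For x > 0 the envelope is attained by the tangent at 1/x; for x = 0 it is the limit of the
  slopes f u / (u - 1), each of which is dominated by the slope of the tangent at u.\<close>
lemma f_star_le_if_affine_minorants_le:
  fixes f :: "real \<Rightarrow> real"
  assumes cvx: "convex_on {0<..} f" and f1: "f 1 = 0" and "x \<ge> 0"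
    and le: "\<And>a b. affine_minorant f a b \<Longrightarrow> ereal (a + b * x) \<le> y"
  shows "f_star f x \<le> y"
proof (cases "x = 0")
  case True
  have slope_le: "ereal (f u / (u - 1)) \<le> y" if "u > 1" for u
  proof -
    from that have "u > 0" by simp
    then obtain a where a: "affine_minorant f a (f u - a * u)"
      using affine_minorant_touching[OF cvx] by blast
    have "a * 1 + (f u - a * u) \<le> f 1"
      using a[unfolded affine_minorant_def, rule_format, of 1] by simp
    with f1 that have "f u / (u - 1) \<le> a"
      by (simp add: divide_le_eq algebra_simps)
    then have "ereal (f u / (u - 1)) \<le> ereal (a + (f u - a * u) * x)"
      using True by simp
    then show ?thesis
      using le[OF a] by (rule order_trans)
  qed
  have "\<forall>\<^sub>F u in at_top. ereal (f u / (u - 1)) \<le> y"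
    using eventually_gt_at_top[of 1] by eventually_elim (rule slope_le)
  then have "f_slope_inf f \<le> y"
    by (rule tendsto_le[OF trivial_limit_at_top_linorder tendsto_const
          tendsto_f_slope_inf(1)[OF cvx f1]])
  with True show ?thesis
    using f_star_zero[OF cvx f1] by simp
next
  case False
  with \<open>x \<ge> 0\<close> have "x > 0" by simp
  then obtain a b where ab: "affine_minorant f a b" "a + b * x = x * f (1 / x)"
    using f_star_eq_affine_minorant[OF cvx] by blast
  with \<open>x > 0\<close> have "f_star f x = ereal (a + b * x)"
    unfolding f_star_def by simp
  with le[OF ab(1)] show ?thesis by simp
qed

lemma affine_minorant_perspective:
  fixes f :: "real \<Rightarrow> real"
  assumes "affine_minorant f a b" and "p > 0" and "q > 0"
  shows "a * p + b * q \<le> q * f (p / q)"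
proof -
  have "a * (p / q) + b \<le> f (p / q)"
    using assms divide_pos_pos[of p q] unfolding affine_minorant_def by blast
  then have "(a * (p / q) + b) * q \<le> f (p / q) * q"
    using \<open>q > 0\<close> by (intro mult_right_mono) auto
  moreover have "(a * (p / q) + b) * q = a * p + b * q"
    using \<open>q > 0\<close> by (simp add: field_simps)
  ultimately show ?thesis by (simp add: mult.commute)
qed

lemma affine_minorants_bound_perspective:
  fixes f :: "real \<Rightarrow> real"
  assumes m1: "affine_minorant f a1 b1" and m2: "affine_minorant f a2 b2"
    and "\<gamma> > 0" and "p > 0" and "q > 0"
  shows "(a1 + a2 - f \<gamma> / \<gamma>) * p + b1 * min q (p / \<gamma>) + b2 * max q (p / \<gamma>) \<le> q * f (p / q)"
proof -
  have at_\<gamma>: "a * p + b * (p / \<gamma>) \<le> p / \<gamma> * f \<gamma>" if "affine_minorant f a b" for a b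
    using affine_minorant_perspective[OF that \<open>p > 0\<close>, of "p / \<gamma>"] \<open>\<gamma> > 0\<close> \<open>p > 0\<close> by simp
  show ?thesis
  proof (cases "p / \<gamma> \<le> q")
    case True
    then show ?thesis
      using at_\<gamma>[OF m1] affine_minorant_perspective[OF m2 \<open>p > 0\<close> \<open>q > 0\<close>]
      by (simp add: algebra_simps)
  next
    case False
    then show ?thesis
      using at_\<gamma>[OF m2] affine_minorant_perspective[OF m1 \<open>p > 0\<close> \<open>q > 0\<close>]
      by (simp add: algebra_simps)
  qed
qed

lemma fdiv_integrand_ge_affine_minorants:
  fixes f :: "real \<Rightarrow> real"
  assumes cvx: "convex_on {0<..} f" and f1: "f 1 = 0"
    and m1: "affine_minorant f a1 b1" and m2: "affine_minorant f a2 b2"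
    and "\<gamma> > 0" and "p \<ge> 0" and "q \<ge> 0"
  shows "ereal ((a1 + a2 - f \<gamma> / \<gamma>) * p + b1 * min q (p / \<gamma>) + b2 * max q (p / \<gamma>))
           \<le> fdiv_integrand f p q"
proof -
  consider "p > 0" "q > 0" | "p = 0" "q > 0" | "p > 0" "q = 0" | "p = 0" "q = 0"
    using \<open>p \<ge> 0\<close> \<open>q \<ge> 0\<close> by fastforce
  then show ?thesis
  proof cases
    case 1
    then show ?thesis
      using affine_minorants_bound_perspective[OF m1 m2 \<open>\<gamma> > 0\<close>] by (simp add: fdiv_integrand_def)
  next
    case 2
    then have "ereal q * ereal b2 \<le> ereal q * f_zero f"
      using affine_minorant_le_f_zero[OF cvx f1 m2] by (intro ereal_mult_left_mono) auto
    with 2 \<open>\<gamma> > 0\<close> show ?thesis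
      by (simp add: fdiv_integrand_def mult.commute)
  next
    case 3
    then have "min q (p / \<gamma>) = 0" "max q (p / \<gamma>) = p / \<gamma>"
      using \<open>\<gamma> > 0\<close> by simp_all
    moreover have "a2 * p + b2 * (p / \<gamma>) \<le> p / \<gamma> * f \<gamma>"
      using affine_minorant_perspective[OF m2 \<open>p > 0\<close>, of "p / \<gamma>"] \<open>\<gamma> > 0\<close> \<open>p > 0\<close> by simp
    ultimately have "ereal ((a1 + a2 - f \<gamma> / \<gamma>) * p + b1 * min q (p / \<gamma>) + b2 * max q (p / \<gamma>))
        \<le> ereal p * ereal a1"
      by (simp add: algebra_simps)
    also have "\<dots> \<le> ereal p * f_slope_inf f"
      using 3 affine_minorant_le_f_slope_inf[OF cvx f1 m1] by (intro ereal_mult_left_mono) auto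
    finally show ?thesis
      using 3 by (simp add: fdiv_integrand_def)
  next
    case 4
    then show ?thesis
      by (simp add: fdiv_integrand_def)
  qed
qed

lemma integral_le_nn_integral_pos_minus_neg:
  fixes g :: "'a \<Rightarrow> real" and h :: "'a \<Rightarrow> ereal"
  assumes "integrable M g" and le: "\<forall>x\<in>space M. ereal (g x) \<le> h x"
  shows "ereal (integral\<^sup>L M g) \<le>
     enn2ereal (\<integral>\<^sup>+ x. e2ennreal (h x) \<partial>M) - enn2ereal (\<integral>\<^sup>+ x. e2ennreal (- h x) \<partial>M)"
proof -
  obtain r s where rs: "0 \<le> r" "0 \<le> s" "(\<integral>\<^sup>+x. ennreal (g x)\<partial>M) = ennreal r"
    "(\<integral>\<^sup>+x. ennreal (- g x)\<partial>M) = ennreal s" "integral\<^sup>L M g = r - s"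
    using integrableE[OF assms(1)] by metis
  have "(\<integral>\<^sup>+x. ennreal (g x)\<partial>M) \<le> (\<integral>\<^sup>+ x. e2ennreal (h x) \<partial>M)"
    using le by (intro nn_integral_mono) (metis e2ennreal_ereal e2ennreal_mono)
  then have pos: "ereal r \<le> enn2ereal (\<integral>\<^sup>+ x. e2ennreal (h x) \<partial>M)"
    using rs by (metis enn2ereal_ennreal less_eq_ennreal.rep_eq)
  have "(\<integral>\<^sup>+ x. e2ennreal (- h x) \<partial>M) \<le> (\<integral>\<^sup>+x. ennreal (- g x)\<partial>M)"
    using le by (intro nn_integral_mono)
      (metis e2ennreal_ereal e2ennreal_mono ereal_minus_le_minus uminus_ereal.simps(1))
  then have neg: "enn2ereal (\<integral>\<^sup>+ x. e2ennreal (- h x) \<partial>M) \<le> ereal s"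
    using rs by (metis enn2ereal_ennreal less_eq_ennreal.rep_eq)
  show ?thesis
    using ereal_minus_mono[OF pos neg] rs(5) by simp
qed

lemma f_divergence_ge_affine_minorants:
  fixes f :: "real \<Rightarrow> real" and p q :: "'a \<Rightarrow> real"
  assumes cvx: "convex_on {0<..} f" and f1: "f 1 = 0"
    and m1: "affine_minorant f a1 b1" and m2: "affine_minorant f a2 b2" and "\<gamma> > 0"
    and p: "integrable \<mu> p" "\<forall>x\<in>space \<mu>. p x \<ge> 0"
    and q: "integrable \<mu> q" "\<forall>x\<in>space \<mu>. q x \<ge> 0"
  shows "ereal ((a1 + a2 - f \<gamma> / \<gamma>) * (\<integral>x. p x \<partial>\<mu>) + b1 * (\<integral>x. min (q x) (p x / \<gamma>) \<partial>\<mu>)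
                + b2 * (\<integral>x. max (q x) (p x / \<gamma>) \<partial>\<mu>)) \<le> f_divergence f \<mu> p q"
proof -
  define g where
    "g x = (a1 + a2 - f \<gamma> / \<gamma>) * p x + b1 * min (q x) (p x / \<gamma>) + b2 * max (q x) (p x / \<gamma>)"
    for x
  have "integrable \<mu> g"
    unfolding g_def using p(1) q(1) by simp
  moreover have "\<forall>x\<in>space \<mu>. ereal (g x) \<le> fdiv_integrand f (p x) (q x)"
    unfolding g_def using fdiv_integrand_ge_affine_minorants[OF cvx f1 m1 m2 \<open>\<gamma> > 0\<close>] p(2) q(2)
    by blast
  ultimately have "ereal (integral\<^sup>L \<mu> g) \<le> f_divergence f \<mu> p q"
    unfolding f_divergence_def by (rule integral_le_nn_integral_pos_minus_neg)
  moreover have "integral\<^sup>L \<mu> g = (a1 + a2 - f \<gamma> / \<gamma>) * (\<integral>x. p x \<partial>\<mu>)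
      + b1 * (\<integral>x. min (q x) (p x / \<gamma>) \<partial>\<mu>) + b2 * (\<integral>x. max (q x) (p x / \<gamma>) \<partial>\<mu>)"
    unfolding g_def using p(1) q(1) by (simp add: integrable_min integrable_max)
  ultimately show ?thesis by simp
qed

lemma f_divergence_ge_f_star:
  fixes f :: "real \<Rightarrow> real" and p q :: "'a \<Rightarrow> real"
  assumes cvx: "convex_on {0<..} f" and f1: "f 1 = 0" and "\<gamma> > 0"
    and p: "integrable \<mu> p" "\<forall>x\<in>space \<mu>. p x \<ge> 0" "(\<integral>x. p x \<partial>\<mu>) = 1"
    and q: "integrable \<mu> q" "\<forall>x\<in>space \<mu>. q x \<ge> 0"
  defines "x1 \<equiv> \<integral>x. min (q x) (p x / \<gamma>) \<partial>\<mu>" and "x2 \<equiv> \<integral>x. max (q x) (p x / \<gamma>) \<partial>\<mu>"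
  shows "f_divergence f \<mu> p q \<ge> f_star f x2 + f_star f x1 - f_star f (1 / \<gamma>)"
proof -
  have "x1 \<ge> 0"
    unfolding x1_def using \<open>\<gamma> > 0\<close> p(2) q(2) by (auto intro!: integral_nonneg_AE)
  have "(\<integral>x. p x / \<gamma> \<partial>\<mu>) \<le> x2"
    unfolding x2_def using p(1) q(1) by (intro integral_mono) auto
  moreover have "(\<integral>x. p x / \<gamma> \<partial>\<mu>) = 1 / \<gamma>"
    using p(3) by simp
  ultimately have "x2 > 0"
    using \<open>\<gamma> > 0\<close> by (smt (verit) divide_pos_pos)
  then obtain a2 b2 where m2: "affine_minorant f a2 b2" and a2b2: "a2 + b2 * x2 = x2 * f (1 / x2)"
    using f_star_eq_affine_minorant[OF cvx] by blast
  define c where "c = x2 * f (1 / x2) - f \<gamma> / \<gamma>"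
  have "ereal (a1 + b1 * x1) \<le> f_divergence f \<mu> p q - ereal c"
    if m1: "affine_minorant f a1 b1" for a1 b1
  proof -
    have "(a1 + a2 - f \<gamma> / \<gamma>) * 1 + b1 * x1 + b2 * x2 = (a1 + b1 * x1) + c"
      unfolding c_def using a2b2 by simp
    then have "ereal ((a1 + b1 * x1) + c) \<le> f_divergence f \<mu> p q"
      using f_divergence_ge_affine_minorants[OF cvx f1 m1 m2 \<open>\<gamma> > 0\<close> p(1,2) q]
      unfolding p(3) x1_def[symmetric] x2_def[symmetric] by metis
    then show ?thesis
      by (cases "f_divergence f \<mu> p q") auto
  qed
  then have "f_star f x1 \<le> f_divergence f \<mu> p q - ereal c"
    using f_star_le_if_affine_minorants_le[OF cvx f1 \<open>x1 \<ge> 0\<close>] by blast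
  moreover have "f_star f x2 = ereal (x2 * f (1 / x2))" "f_star f (1 / \<gamma>) = ereal (f \<gamma> / \<gamma>)"
    unfolding f_star_def using \<open>x2 > 0\<close> \<open>\<gamma> > 0\<close> by simp_all
  ultimately show ?thesis
    unfolding c_def by (cases "f_star f x1"; cases "f_divergence f \<mu> p q") auto
qed

lemma measure_density_eq_integral:
  fixes p :: "'a \<Rightarrow> real"
  assumes "integrable \<mu> p" and "\<forall>x\<in>space \<mu>. p x \<ge> 0" and "U \<in> sets \<mu>"
  shows "measure (density \<mu> p) U = (\<integral>x. p x * indicator U x \<partial>\<mu>)"
proof -
  have int: "integrable \<mu> (\<lambda>x. p x * indicator U x)"
    using integrable_real_mult_indicator[OF assms(3,1)] by simp
  have "emeasure (density \<mu> p) U = (\<integral>\<^sup>+ x. ennreal (p x * indicator U x) \<partial>\<mu>)"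
    using assms by (subst emeasure_density) (auto intro!: nn_integral_cong simp: indicator_def)
  also have "\<dots> = ennreal (\<integral>x. p x * indicator U x \<partial>\<mu>)"
    using assms(2) by (intro nn_integral_eq_integral[OF int]) auto
  finally show ?thesis
    unfolding measure_def using assms(2) by (simp add: integral_nonneg_AE)
qed

text \<open>The supremum defining E_\<gamma> is attained at U = {\<gamma> q < p}.\<close>
lemma E_gamma_density:
  fixes p q :: "'a \<Rightarrow> real"
  assumes p: "integrable \<mu> p" "\<forall>x\<in>space \<mu>. p x \<ge> 0"
    and q: "integrable \<mu> q" "\<forall>x\<in>space \<mu>. q x \<ge> 0"
  shows "E_gamma \<gamma> (density \<mu> p) (density \<mu> q) = (\<integral>x. max 0 (p x - \<gamma> * q x) \<partial>\<mu>)"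
proof -
  have [measurable]: "p \<in> borel_measurable \<mu>" "q \<in> borel_measurable \<mu>"
    using p(1) q(1) by auto
  define D where "D U = measure (density \<mu> p) U - \<gamma> * measure (density \<mu> q) U" for U
  have D: "D U = (\<integral>x. (p x - \<gamma> * q x) * indicator U x \<partial>\<mu>)" if "U \<in> sets \<mu>" for U
    unfolding D_def
    using measure_density_eq_integral[OF p that] measure_density_eq_integral[OF q that]
      integrable_real_mult_indicator[OF that p(1)] integrable_real_mult_indicator[OF that q(1)]
    by (simp add: left_diff_distrib mult.assoc)
  have int: "integrable \<mu> (\<lambda>x. (p x - \<gamma> * q x) * indicator U x)" if "U \<in> sets \<mu>" for U
    using p(1) q(1) by (intro integrable_real_mult_indicator that) auto
  define U0 where "U0 = {x\<in>space \<mu>. \<gamma> * q x < p x}"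
  have U0: "U0 \<in> sets \<mu>"
    unfolding U0_def by measurable
  have "(SUP U\<in>sets \<mu>. D U) = (\<integral>x. max 0 (p x - \<gamma> * q x) \<partial>\<mu>)"
  proof (rule cSup_eq_maximum)
    have "D U0 = (\<integral>x. max 0 (p x - \<gamma> * q x) \<partial>\<mu>)"
      unfolding D[OF U0]
      by (rule Bochner_Integration.integral_cong) (auto simp: U0_def indicator_def)
    then show "(\<integral>x. max 0 (p x - \<gamma> * q x) \<partial>\<mu>) \<in> D ` sets \<mu>"
      using U0 by force
  next
    fix y assume "y \<in> D ` sets \<mu>"
    then obtain U where U: "U \<in> sets \<mu>" and y: "y = D U" by auto
    show "y \<le> (\<integral>x. max 0 (p x - \<gamma> * q x) \<partial>\<mu>)"
      unfolding y D[OF U] using int[OF U] p(1) q(1)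
      by (intro integral_mono) (auto simp: indicator_def)
  qed
  then show ?thesis
    unfolding E_gamma_def D_def by simp
qed

lemma integral_min_max_E_gamma:
  fixes p q :: "'a \<Rightarrow> real"
  assumes "\<gamma> > 0"
    and p: "integrable \<mu> p" "\<forall>x\<in>space \<mu>. p x \<ge> 0"
    and q: "integrable \<mu> q" "\<forall>x\<in>space \<mu>. q x \<ge> 0"
  shows "(\<integral>x. min (q x) (p x / \<gamma>) \<partial>\<mu>)
           = ((\<integral>x. p x \<partial>\<mu>) - E_gamma \<gamma> (density \<mu> p) (density \<mu> q)) / \<gamma>"
    and "(\<integral>x. max (q x) (p x / \<gamma>) \<partial>\<mu>)
           = (\<integral>x. q x \<partial>\<mu>) + E_gamma \<gamma> (density \<mu> p) (density \<mu> q) / \<gamma>"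
proof -
  have "min (q x) (p x / \<gamma>) = (p x - max 0 (p x - \<gamma> * q x)) / \<gamma>"
       "max (q x) (p x / \<gamma>) = q x + max 0 (p x - \<gamma> * q x) / \<gamma>" for x
    using \<open>\<gamma> > 0\<close> by (auto simp: field_simps min_def max_def)
  then show "(\<integral>x. min (q x) (p x / \<gamma>) \<partial>\<mu>)
           = ((\<integral>x. p x \<partial>\<mu>) - E_gamma \<gamma> (density \<mu> p) (density \<mu> q)) / \<gamma>"
    and "(\<integral>x. max (q x) (p x / \<gamma>) \<partial>\<mu>)
           = (\<integral>x. q x \<partial>\<mu>) + E_gamma \<gamma> (density \<mu> p) (density \<mu> q) / \<gamma>"
    unfolding E_gamma_density[OF p q] using p(1) q(1) by (simp_all add: integrable_max)
qed

lemma prob_space_density_integrable: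
  fixes p :: "'a \<Rightarrow> real"
  assumes "prob_space (density \<mu> p)" and [measurable]: "p \<in> borel_measurable \<mu>"
    and "\<forall>x\<in>space \<mu>. p x \<ge> 0"
  shows "integrable \<mu> p" and "(\<integral>x. p x \<partial>\<mu>) = 1"
proof -
  interpret P: prob_space "density \<mu> p" by fact
  have nonneg: "AE x in \<mu>. 0 \<le> p x"
    using assms(3) by auto
  show "integrable \<mu> p"
    using integrable_density[of "\<lambda>_. 1::real" \<mu> p] nonneg by simp
  show "(\<integral>x. p x \<partial>\<mu>) = 1"
    using integral_density[of "\<lambda>_. 1::real" \<mu> p] nonneg P.prob_space by simp
qed

theorem theorem5:
  fixes f :: "real \<Rightarrow> real" and \<mu> P Q :: "'a measure"
    and p q :: "'a \<Rightarrow> real" and \<gamma> :: real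
  assumes "convex_on {0<..} f" and "f 1 = 0"
    and "prob_space P" and "prob_space Q"
    and "p \<in> borel_measurable \<mu>" and "q \<in> borel_measurable \<mu>"
    and "\<forall>x\<in>space \<mu>. p x \<ge> 0" and "\<forall>x\<in>space \<mu>. q x \<ge> 0"
    and "P = density \<mu> p" and "Q = density \<mu> q"
    and "\<gamma> \<ge> 1"
  shows "f_divergence f \<mu> p q \<ge>
           f_star f (1 + E_gamma \<gamma> P Q / \<gamma>)
         + f_star f ((1 - E_gamma \<gamma> P Q) / \<gamma>)
         - f_star f (1 / \<gamma>)"
proof -
  have "\<gamma> > 0" using assms(11) by simp
  note p = prob_space_density_integrable[OF assms(3)[unfolded assms(9)] assms(5,7)]
  note q = prob_space_density_integrable[OF assms(4)[unfolded assms(10)] assms(6,8)]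
  show ?thesis
    using f_divergence_ge_f_star[OF assms(1,2) \<open>\<gamma> > 0\<close> p(1) assms(7) p(2) q(1) assms(8)]
    unfolding integral_min_max_E_gamma[OF \<open>\<gamma> > 0\<close> p(1) assms(7) q(1) assms(8)] p(2) q(2)
      assms(9,10) .
qed

end
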